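(* Assume (C1) and (C2). Let $d_0\in(0,+\infty)$. Every Cerami sequence $\{u_k\}\subset\mathcal{D}$ of $I$ at level $d_0$ has at least one subsequence that converges in $\mathcal{D}$. Here a Cerami sequence at level $d_0$ is a sequence with $I(u_k)\to d_0$ and $\|I'(u_k)\|(1+\|u_k\|)\to0$.
   Context: Fix real numbers $p,q,r$ with $1<p<q$, $\frac p2$ a positive integer, and $r\ge1$, and functions $a,b,c:\mathbb{Z}\to(0,+\infty)$. Conditions: - (C1) There is $b_0>0$ with $b(n)\ge b_0$ for all $n$ and $b(n)\to+\infty$ as $|n|\to\infty$. - (C2) There is $c_0>0$ with $c(n)\le c_0$ for all $n$ and $\sum_n c(n)<+\infty$. Notation and spaces: - $\Delta u(n)=u(n+1)-u(n)$. - $E$ is the set of real sequences $u$ with $\|u\|:=\big(\sum_n[a(n)|\Delta u(n)|^p+b(n)|u(n)|^p]\big)^{1/p}<\infty$. - $\mathcal{D}=\{u\in E:\sum_n c(n)|u(n)|^q\ln|u(n)|^r<+\infty\}$, where terms with $u(n)=0$ are read as $0$. It carries the norm $\|\cdot\|$. For $u,v\in\mathcal{D}$: - $I(u)=\frac1p\|u\|^p+\frac{r}{q^2}\sum_n c(n)|u(n)|^q-\frac1q\sum_n c(n)|u(n)|^q\ln|u(n)|^r$. - $\langle I'(u),v\rangle=\sum_n[a(n)|\Delta u(n)|^{p-2}\Delta u(n)\Delta v(n)+b(n)|u(n)|^{p-2}u(n)v(n)]-\sum_n c(n)|u(n)|^{q-2}u(n)v(n)\ln|u(n)|^r$. - $\|I'(u)\|$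 denotes the dual norm $\sup\{|\langle I'(u),v\rangle|:v\in\mathcal{D},\|v\|\le1\}$. *)

theory Defs
  imports "HOL-Analysis.Analysis"
begin

definition fdiff :: "(int \<Rightarrow> real) \<Rightarrow> int \<Rightarrow> real" where
  "fdiff u n = u (n + 1) - u n"

definition Eterm :: "(int \<Rightarrow> real) \<Rightarrow> (int \<Rightarrow> real) \<Rightarrow> real \<Rightarrow> (int \<Rightarrow> real) \<Rightarrow> int \<Rightarrow> real" where
  "Eterm a b p u n = a n * \<bar>fdiff u n\<bar> powr p + b n * \<bar>u n\<bar> powr p"

definition inE :: "(int \<Rightarrow> real) \<Rightarrow> (int \<Rightarrow> real) \<Rightarrow> real \<Rightarrow> (int \<Rightarrow> real) \<Rightarrow> bool" where
  "inE a b p u \<longleftrightarrow> (Eterm a b p u) summable_on UNIV"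

definition Enorm :: "(int \<Rightarrow> real) \<Rightarrow> (int \<Rightarrow> real) \<Rightarrow> real \<Rightarrow> (int \<Rightarrow> real) \<Rightarrow> real" where
  "Enorm a b p u = (infsum (Eterm a b p u) UNIV) powr (1 / p)"

text \<open>Term c(n)|u(n)|^q ln |u(n)|^r ; it is 0 when u(n) = 0 (0 powr _ = 0, ln 0 = 0).\<close>
definition logterm :: "(int \<Rightarrow> real) \<Rightarrow> real \<Rightarrow> real \<Rightarrow> (int \<Rightarrow> real) \<Rightarrow> int \<Rightarrow> real" where
  "logterm c q r u n = c n * \<bar>u n\<bar> powr q * ln (\<bar>u n\<bar> powr r)"

definition inD :: "(int \<Rightarrow> real) \<Rightarrow> (int \<Rightarrow> real) \<Rightarrow> (int \<Rightarrow> real) \<Rightarrow> real \<Rightarrow> real \<Rightarrow> real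
    \<Rightarrow> (int \<Rightarrow> real) \<Rightarrow> bool" where
  "inD a b c p q r u \<longleftrightarrow> inE a b p u \<and> (logterm c q r u) summable_on UNIV"

definition Ifun :: "(int \<Rightarrow> real) \<Rightarrow> (int \<Rightarrow> real) \<Rightarrow> (int \<Rightarrow> real) \<Rightarrow> real \<Rightarrow> real \<Rightarrow> real
    \<Rightarrow> (int \<Rightarrow> real) \<Rightarrow> real" where
  "Ifun a b c p q r u =
     (1 / p) * (Enorm a b p u powr p)
     + (r / q\<^sup>2) * infsum (\<lambda>n. c n * \<bar>u n\<bar> powr q) UNIV
     - (1 / q) * infsum (logterm c q r u) UNIV"

definition Ideriv :: "(int \<Rightarrow> real) \<Rightarrow> (int \<Rightarrow> real) \<Rightarrow> (int \<Rightarrow> real) \<Rightarrow> real \<Rightarrow> real \<Rightarrow> real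
    \<Rightarrow> (int \<Rightarrow> real) \<Rightarrow> (int \<Rightarrow> real) \<Rightarrow> real" where
  "Ideriv a b c p q r u v =
     infsum (\<lambda>n. a n * \<bar>fdiff u n\<bar> powr (p - 2) * fdiff u n * fdiff v n
                 + b n * \<bar>u n\<bar> powr (p - 2) * u n * v n) UNIV
     - infsum (\<lambda>n. c n * \<bar>u n\<bar> powr (q - 2) * u n * v n * ln (\<bar>u n\<bar> powr r)) UNIV"

text \<open>Dual norm, valued in the extended reals (it may a priori be infinite).\<close>
definition dualnorm :: "(int \<Rightarrow> real) \<Rightarrow> (int \<Rightarrow> real) \<Rightarrow> (int \<Rightarrow> real) \<Rightarrow> real \<Rightarrow> real \<Rightarrow> real
    \<Rightarrow> (int \<Rightarrow> real) \<Rightarrow> ereal" where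
  "dualnorm a b c p q r u =
     (SUP v \<in> {v. inD a b c p q r v \<and> Enorm a b p v \<le> 1}. ereal \<bar>Ideriv a b c p q r u v\<bar>)"

end

theory Submission
  imports Defs
begin

(* The exponent p = 2m is even, so the summands of the norm and of the p-Laplacian part of I'
   are polynomials, and the odd power t^(2m-1) is strongly monotone: ||u - v||^p is bounded by a
   multiple of |<I'(u), u - v>| + |<I'(v), u - v>| plus the logarithmic terms.
   For a Cerami sequence, I(u) - <I'(u), u>/q >= (1/p - 1/q) ||u||^p bounds the norms; since
   b >= b0 > 0 the sequence is then uniformly bounded, so a subsequence converges pointwise to
   some w. Along it the derivative terms vanish because I'(u_k) -> 0 in the dual norm, and the
   logarithmic terms vanish by dominated convergence against the summable weight c. Hence the
   subsequence is Cauchy in E, and by Fatou's lemma it converges to w in E. *)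

section \<open>Elementary inequalities\<close>

lemma abs_powr_even: "even n \<Longrightarrow> 0 < n \<Longrightarrow> \<bar>t::real\<bar> powr real n = t ^ n"
  by (cases "t = 0") (simp_all add: powr_realpow power_even_abs)

lemma abs_powr_diff_two_mult:
  assumes "even n" "2 \<le> n"
  shows "\<bar>t::real\<bar> powr (real n - 2) * t = t ^ (n - 1)"
proof (cases "t = 0")
  case True
  then show ?thesis using assms(2) by simp
next
  case False
  have "\<bar>t\<bar> powr real (n - 2) = t ^ (n - 2)"
    using False assms(1) by (simp add: powr_realpow power_even_abs)
  moreover have "real (n - 2) = real n - 2" using assms(2) by simp
  ultimately have "\<bar>t\<bar> powr (real n - 2) = t ^ (n - 2)" by simp
  moreover have "t ^ (n - 2) * t = t ^ (n - 1)"
    using assms(2) by (metis Suc_diff_Suc Suc_1 Suc_le_lessD diff_Suc_1 power_Suc2)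
  ultimately show ?thesis by simp
qed

lemma abs_power_pred_mult_le: "0 < n \<Longrightarrow> \<bar>x::real\<bar> ^ (n - 1) * \<bar>y\<bar> \<le> \<bar>x\<bar> ^ n + \<bar>y\<bar> ^ n"
proof -
  assume "0 < n"
  then have pow: "\<bar>z::real\<bar> ^ (n - 1) * \<bar>z\<bar> = \<bar>z\<bar> ^ n" for z
    by (metis Suc_diff_1 power_Suc2)
  show ?thesis
  proof (cases "\<bar>y\<bar> \<le> \<bar>x\<bar>")
    case True
    then have "\<bar>x\<bar> ^ (n - 1) * \<bar>y\<bar> \<le> \<bar>x\<bar> ^ n" by (metis pow abs_ge_zero mult_left_mono zero_le_power)
    then show ?thesis by (simp add: add_increasing2)
  next
    case False
    then have "\<bar>x\<bar> ^ (n - 1) * \<bar>y\<bar> \<le> \<bar>y\<bar> ^ n"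
      by (metis pow abs_ge_zero mult_right_mono power_mono linorder_linear)
    then show ?thesis by (simp add: add_increasing)
  qed
qed

lemma max_power_le_sum: "max \<bar>x::real\<bar> \<bar>y\<bar> ^ n \<le> \<bar>x\<bar> ^ n + \<bar>y\<bar> ^ n"
  by (simp add: max_def add_increasing add_increasing2)

lemma abs_diff_power_le: "\<bar>x - y::real\<bar> ^ n \<le> 2 ^ n * (\<bar>x\<bar> ^ n + \<bar>y\<bar> ^ n)"
proof -
  have "\<bar>x - y\<bar> ^ n \<le> (2 * max \<bar>x\<bar> \<bar>y\<bar>) ^ n" by (rule power_mono) auto
  also have "\<dots> \<le> 2 ^ n * (\<bar>x\<bar> ^ n + \<bar>y\<bar> ^ n)"
    unfolding power_mult_distrib by (simp add: max_power_le_sum)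
  finally show ?thesis .
qed

lemma odd_power_strongly_monotone:
  assumes "even n" "2 \<le> n"
  shows "(x - y::real) ^ n / 2 ^ (n - 1) \<le> (x ^ (n - 1) - y ^ (n - 1)) * (x - y)"
proof -
  define k where "k = n - 2"
  have n: "n = k + 2" "n - 1 = k + 1" and "even k" using assms by (simp_all add: k_def)
  have odd_pow: "z ^ (k + 1) = \<bar>z\<bar> ^ k * z" for z :: real
    using \<open>even k\<close> by (simp add: power_even_abs mult.commute)
  \<comment> \<open>Symmetrise: the second summand is \<open>\<ge> 0\<close> since \<open>\<bar>\<cdot>\<bar>\<^sup>k\<close> and \<open>(\<cdot>)\<^sup>2\<close> are ordered alike.\<close>
  have split: "(\<bar>x\<bar> ^ k * x - \<bar>y\<bar> ^ k * y) * (x - y)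
      = (\<bar>x\<bar> ^ k + \<bar>y\<bar> ^ k) * (x - y)\<^sup>2 / 2 + (\<bar>x\<bar> ^ k - \<bar>y\<bar> ^ k) * (x\<^sup>2 - y\<^sup>2) / 2"
    by (simp add: power2_eq_square field_simps)
  have "0 \<le> (\<bar>x\<bar> ^ k - \<bar>y\<bar> ^ k) * (x\<^sup>2 - y\<^sup>2)"
    by (cases "\<bar>y\<bar> \<le> \<bar>x\<bar>")
       (auto intro!: mult_nonneg_nonneg mult_nonpos_nonpos simp: power_mono abs_le_square_iff)
  then have lower: "(\<bar>x\<bar> ^ k + \<bar>y\<bar> ^ k) * (x - y)\<^sup>2 / 2 \<le> (x ^ (n - 1) - y ^ (n - 1)) * (x - y)"
    unfolding n(2) odd_pow split by simp
  have "(x - y) ^ n = \<bar>x - y\<bar> ^ k * (x - y)\<^sup>2"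
    using \<open>even k\<close> by (simp add: n power_add power_even_abs power2_eq_square)
  also have "\<dots> \<le> 2 ^ k * (\<bar>x\<bar> ^ k + \<bar>y\<bar> ^ k) * (x - y)\<^sup>2"
    by (rule mult_right_mono[OF abs_diff_power_le]) simp
  finally have "(x - y) ^ n / 2 ^ (n - 1) \<le> (\<bar>x\<bar> ^ k + \<bar>y\<bar> ^ k) * (x - y)\<^sup>2 / 2"
    by (simp add: n field_simps)
  with lower show ?thesis by linarith
qed

lemma abs_le_one_plus_power:
  assumes "0 < n"
  shows "\<bar>t::real\<bar> \<le> 1 + \<bar>t\<bar> ^ n"
proof (cases "\<bar>t\<bar> \<le> 1")
  case False
  then have "\<bar>t\<bar> ^ 1 \<le> \<bar>t\<bar> ^ n" using assms by (intro power_increasing) auto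
  then show ?thesis by simp
qed (simp add: add_increasing2)

lemma abs_powr_mult_abs_ln_le:
  assumes "1 \<le> s" "\<bar>t::real\<bar> \<le> B"
  shows "\<bar>t\<bar> powr s * \<bar>ln \<bar>t\<bar>\<bar> \<le> 1 + max 1 B powr (s + 1)"
proof (cases "\<bar>t\<bar> \<le> 1")
  case True
  have "\<bar>t\<bar> powr s * \<bar>ln \<bar>t\<bar>\<bar> \<le> \<bar>t\<bar> * \<bar>ln \<bar>t\<bar>\<bar>"
  proof (rule mult_right_mono)
    have "\<bar>t\<bar> powr s \<le> \<bar>t\<bar> powr 1" using True assms(1) by (intro powr_mono') auto
    then show "\<bar>t\<bar> powr s \<le> \<bar>t\<bar>" by (cases "t = 0") auto
  qed simp
  also have "\<dots> \<le> 1"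
  proof (cases "t = 0")
    case False
    have "ln (1 / \<bar>t\<bar>) \<le> 1 / \<bar>t\<bar> - 1" using False by (intro ln_le_minus_one) simp
    then show ?thesis using False True by (simp add: ln_div field_simps)
  qed simp
  finally show ?thesis using powr_ge_zero[of "max 1 B" "s + 1"] by linarith
next
  case False
  then have "\<bar>t\<bar> powr s * \<bar>ln \<bar>t\<bar>\<bar> \<le> \<bar>t\<bar> powr s * \<bar>t\<bar>"
    using ln_le_minus_one[of "\<bar>t\<bar>"] by (intro mult_left_mono) force+
  also have "\<dots> = \<bar>t\<bar> powr (s + 1)" using False by (simp add: powr_add)
  also have "\<dots> \<le> max 1 B powr (s + 1)" using False assms by (intro powr_mono2) auto
  finally show ?thesis by linarith
qed

lemma abs_powr_mult_ln_powr_le: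
  assumes "1 \<le> s" "\<bar>t::real\<bar> \<le> B" "0 \<le> r"
  shows "\<bar>\<bar>t\<bar> powr s * ln (\<bar>t\<bar> powr r)\<bar> \<le> r * (1 + max 1 B powr (s + 1))"
proof (cases "t = 0")
  case False
  then have "\<bar>\<bar>t\<bar> powr s * ln (\<bar>t\<bar> powr r)\<bar> = r * (\<bar>t\<bar> powr s * \<bar>ln \<bar>t\<bar>\<bar>)"
    using assms(3) by (simp add: ln_powr abs_mult)
  also have "\<dots> \<le> r * (1 + max 1 B powr (s + 1))"
    using abs_powr_mult_abs_ln_le[OF assms(1,2)] assms(3) by (rule mult_left_mono)
  finally show ?thesis .
qed (use assms(3) in \<open>simp add: add_nonneg_nonneg\<close>)

section \<open>Unconditional sums\<close>

lemma summable_on_abs_le: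
  fixes g :: "'a \<Rightarrow> real"
  assumes "f summable_on A" "\<And>x. x \<in> A \<Longrightarrow> \<bar>g x\<bar> \<le> f x"
  shows "g summable_on A"
  using Infinite_Sum.abs_summable_on_comparison_test'[of f A g] assms by (simp add: abs_summable_summable)

lemma summable_on_diff:
  fixes f g :: "'a \<Rightarrow> 'b::topological_ab_group_add"
  assumes "f summable_on A" "g summable_on A"
  shows "(\<lambda>x. f x - g x) summable_on A"
  using summable_on_add[OF assms(1), of "\<lambda>x. - g x"] assms(2) by (simp add: summable_on_uminus)

lemma infsum_diff:
  fixes f g :: "'a \<Rightarrow> 'b::{topological_ab_group_add, t2_space}"
  assumes "f summable_on A" "g summable_on A"
  shows "infsum (\<lambda>x. f x - g x) A = infsum f A - infsum g A"
  using infsum_add[OF assms(1), of "\<lambda>x. - g x"] assms(2) by (simp add: summable_on_uminus infsum_uminus)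

lemma infsum_tendsto_dominated:
  fixes f :: "nat \<Rightarrow> 'a \<Rightarrow> 'b::banach"
  assumes M: "M summable_on A"
    and dom: "\<And>k x. x \<in> A \<Longrightarrow> norm (f k x) \<le> M x"
    and lim: "\<And>x. x \<in> A \<Longrightarrow> (\<lambda>k. f k x) \<longlonglongrightarrow> g x"
  shows "(\<lambda>k. infsum (f k) A) \<longlonglongrightarrow> infsum g A"
proof (rule swap_uniform_limit')
  have "norm (g x) \<le> M x" if "x \<in> A" for x
    using that by (intro tendsto_upperbound[OF tendsto_norm[OF lim]]) (auto simp: dom)
  then have "g summable_on A"
    using Infinite_Sum.abs_summable_on_comparison_test'[OF M] abs_summable_summable by blast
  then show "((\<lambda>F. sum g F) \<longlongrightarrow> infsum g A) (finite_subsets_at_top A)"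
    by (rule infsum_tendsto)
  show "uniform_limit UNIV (\<lambda>F k. sum (f k) F) (\<lambda>k. infsum (f k) A) (finite_subsets_at_top A)"
    using Weierstrass_m_test_general[of A UNIV "\<lambda>x k. f k x" M] dom M by simp
  show "\<forall>\<^sub>F F in finite_subsets_at_top A. ((\<lambda>k. sum (f k) F) \<longlongrightarrow> sum g F) sequentially"
    by (intro eventually_finite_subsets_at_top_weakI tendsto_sum) (auto intro: lim)
qed simp_all

lemma bounded_seq_has_pointwise_convergent_subseq:
  fixes u :: "nat \<Rightarrow> 'a::countable \<Rightarrow> real"
  assumes "\<And>k x. \<bar>u k x\<bar> \<le> B"
  shows "\<exists>\<phi> w. strict_mono \<phi> \<and> (\<forall>x. (\<lambda>k. u (\<phi> k) x) \<longlonglongrightarrow> w x) \<and> (\<forall>x. \<bar>w x\<bar> \<le> B)"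
proof -
  define S :: "('a \<Rightarrow> real) set" where "S = PiE UNIV (\<lambda>_. {-B..B})"
  have "compactin (product_topology (\<lambda>_. euclidean) UNIV) S"
    unfolding S_def compactin_PiE by auto
  then have "seq_compact S"
    by (simp add: euclidean_product_topology compact_imp_seq_compact)
  moreover have "u k \<in> S" for k
    using assms by (auto simp: S_def abs_le_iff minus_le_iff)
  ultimately obtain w \<phi> where "strict_mono \<phi>" "(u \<circ> \<phi>) \<longlonglongrightarrow> w"
    using seq_compactE by metis
  moreover have "(\<lambda>k. u (\<phi> k) x) \<longlonglongrightarrow> w x" for x
    using continuous_on_tendsto_compose[OF _ \<open>(u \<circ> \<phi>) \<longlonglongrightarrow> w\<close>, of UNIV "\<lambda>v. v x"]
    by (simp add: o_def)
  moreover have "\<bar>w x\<bar> \<le> B" for x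
    using assms by (intro tendsto_upperbound[OF tendsto_rabs[OF calculation(3)]]) auto
  ultimately show ?thesis by blast
qed

lemma weighted_abs_diff_tendsto_zero:
  fixes c :: "'a \<Rightarrow> real" and u :: "nat \<Rightarrow> 'a \<Rightarrow> real"
  assumes c: "\<And>x. 0 \<le> c x" "c summable_on UNIV"
    and bound: "\<And>k x. \<bar>u k x\<bar> \<le> B" "\<And>x. \<bar>w x\<bar> \<le> B"
    and lim: "\<And>x. (\<lambda>k. u k x) \<longlonglongrightarrow> w x"
  shows "(\<lambda>k. infsum (\<lambda>x. c x * \<bar>u k x - w x\<bar>) UNIV) \<longlonglongrightarrow> 0"
proof -
  have "\<bar>u k x - w x\<bar> \<le> 2 * B" for k x
    using bound(1)[of k x] bound(2)[of x] by linarith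
  then have "norm (c x * \<bar>u k x - w x\<bar>) \<le> 2 * B * c x" for k x
    using c(1)[of x] by (simp add: abs_mult mult_left_mono mult.commute)
  moreover have "(\<lambda>k. c x * \<bar>u k x - w x\<bar>) \<longlonglongrightarrow> c x * \<bar>w x - w x\<bar>" for x
    by (intro tendsto_intros lim)
  ultimately show ?thesis
    using infsum_tendsto_dominated[of "\<lambda>x. 2 * B * c x" UNIV "\<lambda>k x. c x * \<bar>u k x - w x\<bar>" "\<lambda>_. 0"]
      summable_on_cmult_right[OF c(2)] by simp
qed

section \<open>The space E and the p-Laplacian\<close>

lemma fdiff_scale: "fdiff (\<lambda>n. s * v n) n = s * fdiff v n"
  by (simp add: fdiff_def right_diff_distrib)

lemma fdiff_diff: "fdiff (\<lambda>n. u n - v n) n = fdiff u n - fdiff v n"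
  by (simp add: fdiff_def)

lemma Eterm_zero: "Eterm a b p (\<lambda>n. 0) = (\<lambda>n. 0)"
  by (simp add: fun_eq_iff Eterm_def fdiff_def)

lemma inE_zero: "inE a b p (\<lambda>n. 0)"
  by (simp add: inE_def Eterm_zero)

lemma Enorm_zero: "Enorm a b p (\<lambda>n. 0) = 0"
  by (simp add: Enorm_def Eterm_zero)

definition plap_term :: "(int \<Rightarrow> real) \<Rightarrow> (int \<Rightarrow> real) \<Rightarrow> real \<Rightarrow> (int \<Rightarrow> real) \<Rightarrow> (int \<Rightarrow> real) \<Rightarrow> int \<Rightarrow> real"
  where "plap_term a b p u v n =
    a n * \<bar>fdiff u n\<bar> powr (p - 2) * fdiff u n * fdiff v n + b n * \<bar>u n\<bar> powr (p - 2) * u n * v n"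

lemma plap_term_scale: "plap_term a b p u (\<lambda>n. s * v n) = (\<lambda>n. s * plap_term a b p u v n)"
  by (simp add: fun_eq_iff plap_term_def fdiff_scale algebra_simps)

locale even_weighted_space =
  fixes a b :: "int \<Rightarrow> real" and p b0 :: real and m :: nat
  assumes m_pos: "0 < m" and p_eq: "p = 2 * real m"
    and a_pos: "\<And>n. 0 < a n" and b0_pos: "0 < b0" and b_ge_b0: "\<And>n. b0 \<le> b n"
begin

abbreviation Esum :: "(int \<Rightarrow> real) \<Rightarrow> real" where
  "Esum u \<equiv> infsum (Eterm a b p u) UNIV"

lemma p_pos: "0 < p"
  using m_pos p_eq by simp

lemma b_pos: "0 < b n"
  using b0_pos b_ge_b0[of n] by linarith

lemma abs_powr_p: "\<bar>t\<bar> powr p = t ^ (2 * m)"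
  using abs_powr_even[of "2 * m" t] m_pos by (simp add: p_eq)

lemma Eterm_eq: "Eterm a b p u n = a n * fdiff u n ^ (2 * m) + b n * u n ^ (2 * m)"
  by (simp add: Eterm_def abs_powr_p)

lemma Eterm_nonneg: "0 \<le> Eterm a b p u n"
  using a_pos[of n] b_pos[of n] by (simp add: Eterm_def)

lemma Esum_nonneg: "0 \<le> Esum u"
  by (simp add: infsum_nonneg Eterm_nonneg)

lemma Eterm_le_Esum: "inE a b p u \<Longrightarrow> Eterm a b p u n \<le> Esum u"
  using finite_sum_le_infsum[of "Eterm a b p u" UNIV "{n}"] by (simp add: inE_def Eterm_nonneg)

lemma abs_le_Esum:
  assumes "inE a b p u"
  shows "\<bar>u n\<bar> \<le> 1 + Esum u / b0"
proof -
  have "b0 * \<bar>u n\<bar> ^ (2 * m) \<le> b n * u n ^ (2 * m)"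
    using b_ge_b0[of n] by (simp add: power_even_abs mult_right_mono)
  also have "\<dots> \<le> Eterm a b p u n"
    using a_pos[of n] by (simp add: Eterm_eq)
  also have "\<dots> \<le> Esum u" using Eterm_le_Esum[OF assms] .
  finally have "\<bar>u n\<bar> ^ (2 * m) \<le> Esum u / b0"
    using b0_pos by (simp add: field_simps)
  then show ?thesis using abs_le_one_plus_power[of "2 * m" "u n"] m_pos by linarith
qed

lemma Esum_eq_0_imp_zero:
  assumes "inE a b p u" "Esum u = 0"
  shows "u n = 0"
proof -
  have "0 \<le> a n * fdiff u n ^ (2 * m)"
    using a_pos[of n] by (simp add: power_mult)
  moreover have "Eterm a b p u n \<le> 0"
    using Eterm_le_Esum[OF assms(1), of n] assms(2) by simp
  ultimately have "b n * u n ^ (2 * m) \<le> 0"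
    by (simp add: Eterm_eq)
  then have "u n ^ (2 * m) \<le> 0"
    using b_pos[of n] by (simp add: mult_le_0_iff)
  moreover have "0 \<le> u n ^ (2 * m)"
    by (simp add: power_mult)
  ultimately show ?thesis
    by (metis antisym power_eq_0_iff)
qed

lemma Enorm_nonneg: "0 \<le> Enorm a b p u"
  by (simp add: Enorm_def)

lemma Enorm_powr: "Enorm a b p u powr p = Esum u"
  using p_pos Esum_nonneg[of u] by (simp add: Enorm_def powr_powr)

lemma Enorm_le_powr: "Esum u \<le> M \<Longrightarrow> Enorm a b p u \<le> M powr (1 / p)"
  using p_pos Esum_nonneg[of u] by (simp add: Enorm_def powr_mono2)

lemma Eterm_scale: "Eterm a b p (\<lambda>n. s * v n) n = s ^ (2 * m) * Eterm a b p v n"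
  by (simp add: Eterm_eq fdiff_scale power_mult_distrib distrib_left mult_ac)

lemma inE_scale: "inE a b p v \<Longrightarrow> inE a b p (\<lambda>n. s * v n)"
  unfolding inE_def Eterm_scale by (rule summable_on_cmult_right)

lemma Enorm_scale: "Enorm a b p (\<lambda>n. s * v n) = \<bar>s\<bar> * Enorm a b p v"
proof -
  have "Esum (\<lambda>n. s * v n) = \<bar>s\<bar> powr p * Esum v"
    unfolding Eterm_scale infsum_cmult_right' by (simp add: abs_powr_p)
  then show ?thesis
    using p_pos Esum_nonneg[of v] by (simp add: Enorm_def powr_mult powr_powr)
qed

lemma Eterm_diff_le: "Eterm a b p (\<lambda>n. u n - v n) n \<le> 2 ^ (2 * m) * (Eterm a b p u n + Eterm a b p v n)"
proof -
  have "a n * (fdiff u n - fdiff v n) ^ (2 * m) \<le> a n * (2 ^ (2 * m) * (fdiff u n ^ (2 * m) + fdiff v n ^ (2 * m)))"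
    using abs_diff_power_le[of "fdiff u n" "fdiff v n" "2 * m"] a_pos[of n]
    by (intro mult_left_mono) (simp_all add: power_even_abs)
  moreover have "b n * (u n - v n) ^ (2 * m) \<le> b n * (2 ^ (2 * m) * (u n ^ (2 * m) + v n ^ (2 * m)))"
    using abs_diff_power_le[of "u n" "v n" "2 * m"] b_pos[of n]
    by (intro mult_left_mono) (simp_all add: power_even_abs)
  moreover have "2 ^ (2 * m) * (Eterm a b p u n + Eterm a b p v n)
      = a n * (2 ^ (2 * m) * (fdiff u n ^ (2 * m) + fdiff v n ^ (2 * m)))
        + b n * (2 ^ (2 * m) * (u n ^ (2 * m) + v n ^ (2 * m)))"
    by (simp add: Eterm_eq ring_distribs ac_simps)
  ultimately show ?thesis
    unfolding Eterm_eq fdiff_diff by linarith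
qed

lemma inE_diff: "inE a b p u \<Longrightarrow> inE a b p v \<Longrightarrow> inE a b p (\<lambda>n. u n - v n)"
  unfolding inE_def
  by (rule summable_on_comparison_test[OF _ Eterm_diff_le Eterm_nonneg])
     (intro summable_on_cmult_right summable_on_add)

lemma Esum_diff_le:
  assumes "inE a b p u" "inE a b p v"
  shows "Esum (\<lambda>n. u n - v n) \<le> 2 ^ (2 * m) * (Esum u + Esum v)"
proof -
  have "Esum (\<lambda>n. u n - v n) \<le> infsum (\<lambda>n. 2 ^ (2 * m) * (Eterm a b p u n + Eterm a b p v n)) UNIV"
    using assms inE_diff[OF assms] unfolding inE_def
    by (intro infsum_mono Eterm_diff_le summable_on_cmult_right summable_on_add)
  also have "\<dots> = 2 ^ (2 * m) * (Esum u + Esum v)"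
    using assms by (simp add: infsum_cmult_right' infsum_add inE_def)
  finally show ?thesis .
qed

lemma Enorm_diff_le:
  assumes "inE a b p u" "inE a b p v" "Esum u \<le> M" "Esum v \<le> M"
  shows "Enorm a b p (\<lambda>n. u n - v n) \<le> (2 ^ (2 * m) * (2 * M)) powr (1 / p)"
  using Esum_diff_le[OF assms(1,2)] assms(3,4) by (intro Enorm_le_powr) (simp add: order_trans[OF _ mult_left_mono])

lemma Esum_le_of_pointwise_limit:
  assumes lim: "\<And>n. (\<lambda>j. v j n) \<longlonglongrightarrow> h n"
    and bound: "\<forall>\<^sub>F j in sequentially. inE a b p (v j) \<and> Esum (v j) \<le> \<gamma> j"
    and \<gamma>: "\<gamma> \<longlonglongrightarrow> L"
  shows "inE a b p h \<and> Esum h \<le> L"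
proof -
  have partial_sum_le: "sum (Eterm a b p h) F \<le> L" if "finite F" for F
  proof (rule tendsto_le[OF _ \<gamma>])
    show "(\<lambda>j. sum (Eterm a b p (v j)) F) \<longlonglongrightarrow> sum (Eterm a b p h) F"
      unfolding Eterm_eq fdiff_def by (intro tendsto_intros lim)
    show "\<forall>\<^sub>F j in sequentially. sum (Eterm a b p (v j)) F \<le> \<gamma> j"
      using bound
    proof eventually_elim
      case (elim j)
      then show ?case
        using finite_sum_le_infsum[of "Eterm a b p (v j)" UNIV F] that
        by (simp add: inE_def Eterm_nonneg)
    qed
  qed simp
  have "inE a b p h"
    unfolding inE_def
    by (rule nonneg_bdd_above_summable_on) (auto intro!: bdd_aboveI2 partial_sum_le Eterm_nonneg)
  moreover have "Esum h \<le> L"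
    using \<open>inE a b p h\<close> partial_sum_le by (simp add: inE_def infsum_le_finite_sums)
  ultimately show ?thesis ..
qed

lemma E_limit_of_pairwise_bound:
  assumes uE: "\<And>k. inE a b p (u k)" and lim: "\<And>n. (\<lambda>k. u k n) \<longlonglongrightarrow> w n"
    and \<beta>: "\<beta> \<longlonglongrightarrow> 0"
    and pair: "\<And>i j. K \<le> i \<Longrightarrow> K \<le> j \<Longrightarrow> Esum (\<lambda>n. u i n - u j n) \<le> \<beta> i + \<beta> j"
  shows "inE a b p w \<and> (\<lambda>k. Enorm a b p (\<lambda>n. u k n - w n)) \<longlonglongrightarrow> 0"
proof -
  have near: "inE a b p (\<lambda>n. u i n - w n) \<and> Esum (\<lambda>n. u i n - w n) \<le> \<beta> i" if "K \<le> i" for i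
  proof (rule Esum_le_of_pointwise_limit)
    show "(\<lambda>j. u i n - u j n) \<longlonglongrightarrow> u i n - w n" for n
      by (intro tendsto_intros lim)
    show "\<forall>\<^sub>F j in sequentially. inE a b p (\<lambda>n. u i n - u j n) \<and> Esum (\<lambda>n. u i n - u j n) \<le> \<beta> i + \<beta> j"
      using eventually_ge_at_top[of K] by eventually_elim (use that uE inE_diff pair in auto)
    show "(\<lambda>j. \<beta> i + \<beta> j) \<longlonglongrightarrow> \<beta> i"
      using tendsto_add[OF tendsto_const \<beta>] by simp
  qed
  have "inE a b p (\<lambda>n. u K n - (u K n - w n))"
    using inE_diff uE near[of K] by blast
  then have "inE a b p w" by simp
  moreover have "(\<lambda>k. Esum (\<lambda>n. u k n - w n)) \<longlonglongrightarrow> 0"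
  proof (rule tendsto_sandwich[OF _ _ tendsto_const \<beta>])
    show "\<forall>\<^sub>F k in sequentially. Esum (\<lambda>n. u k n - w n) \<le> \<beta> k"
      using eventually_ge_at_top[of K] by eventually_elim (use near in blast)
  qed (simp add: Esum_nonneg)
  then have "(\<lambda>k. Enorm a b p (\<lambda>n. u k n - w n)) \<longlonglongrightarrow> 0"
    unfolding Enorm_def by (rule tendsto_zero_powrI[OF _ tendsto_const]) (use p_pos Esum_nonneg in auto)
  ultimately show ?thesis ..
qed

lemma abs_powr_p_minus_two_mult: "\<bar>t\<bar> powr (p - 2) * t = t ^ (2 * m - 1)"
  using abs_powr_diff_two_mult[of "2 * m" t] m_pos by (simp add: p_eq)

lemma plap_term_eq:
  "plap_term a b p u v n = a n * fdiff u n ^ (2 * m - 1) * fdiff v n + b n * u n ^ (2 * m - 1) * v n"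
  unfolding plap_term_def by (simp only: mult.assoc abs_powr_p_minus_two_mult[symmetric])

lemma plap_term_self: "plap_term a b p u u n = Eterm a b p u n"
proof -
  have "t ^ (2 * m - 1) * t = t ^ (2 * m)" for t :: real
    using m_pos by (metis Suc_diff_1 mult_pos_pos pos2 power_Suc2)
  then show ?thesis
    by (simp only: plap_term_eq Eterm_eq mult.assoc)
qed

lemma abs_plap_term_le: "\<bar>plap_term a b p u v n\<bar> \<le> Eterm a b p u n + Eterm a b p v n"
proof -
  have young: "\<bar>x ^ (2 * m - 1) * y\<bar> \<le> x ^ (2 * m) + y ^ (2 * m)" for x y :: real
    using abs_power_pred_mult_le[of "2 * m" x y] m_pos by (simp add: abs_mult power_abs power_even_abs)
  have "\<bar>plap_term a b p u v n\<bar>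
      \<le> a n * \<bar>fdiff u n ^ (2 * m - 1) * fdiff v n\<bar> + b n * \<bar>u n ^ (2 * m - 1) * v n\<bar>"
    unfolding plap_term_eq using a_pos[of n] b_pos[of n]
    by (simp add: abs_mult mult.assoc abs_triangle_ineq[THEN order_trans])
  also have "\<dots> \<le> a n * (fdiff u n ^ (2 * m) + fdiff v n ^ (2 * m)) + b n * (u n ^ (2 * m) + v n ^ (2 * m))"
    using a_pos[of n] b_pos[of n] by (intro add_mono mult_left_mono young) auto
  also have "\<dots> = Eterm a b p u n + Eterm a b p v n"
    by (simp add: Eterm_eq algebra_simps)
  finally show ?thesis .
qed

lemma plap_term_summable: "inE a b p u \<Longrightarrow> inE a b p v \<Longrightarrow> plap_term a b p u v summable_on UNIV"
  unfolding inE_def by (rule summable_on_abs_le[OF summable_on_add abs_plap_term_le])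

lemma Eterm_diff_le_plap_term:
  fixes u v :: "int \<Rightarrow> real"
  defines "d \<equiv> \<lambda>n. u n - v n"
  shows "Eterm a b p d n \<le> 2 ^ (2 * m - 1) * (plap_term a b p u d n - plap_term a b p v d n)"
proof -
  have mono: "(x - y) ^ (2 * m) \<le> 2 ^ (2 * m - 1) * ((x ^ (2 * m - 1) - y ^ (2 * m - 1)) * (x - y))" for x y :: real
    using odd_power_strongly_monotone[of "2 * m" x y] m_pos by (simp add: field_simps)
  have "Eterm a b p d n = a n * (fdiff u n - fdiff v n) ^ (2 * m) + b n * (u n - v n) ^ (2 * m)"
    by (simp add: Eterm_eq d_def fdiff_diff)
  also have "\<dots> \<le> a n * (2 ^ (2 * m - 1) * ((fdiff u n ^ (2 * m - 1) - fdiff v n ^ (2 * m - 1)) * (fdiff u n - fdiff v n)))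
      + b n * (2 ^ (2 * m - 1) * ((u n ^ (2 * m - 1) - v n ^ (2 * m - 1)) * (u n - v n)))"
    using a_pos[of n] b_pos[of n] by (intro add_mono mult_left_mono mono) auto
  also have "\<dots> = 2 ^ (2 * m - 1) * (plap_term a b p u d n - plap_term a b p v d n)"
    by (simp add: plap_term_eq d_def fdiff_diff algebra_simps)
  finally show ?thesis .
qed

lemma Esum_diff_le_plap:
  fixes u v :: "int \<Rightarrow> real"
  assumes "inE a b p u" "inE a b p v"
  defines "d \<equiv> \<lambda>n. u n - v n"
  shows "Esum d \<le> 2 ^ (2 * m - 1) * (infsum (plap_term a b p u d) UNIV - infsum (plap_term a b p v d) UNIV)"
proof -
  have dE: "inE a b p d" unfolding d_def by (rule inE_diff[OF assms(1,2)])
  have "Esum d \<le> infsum (\<lambda>n. 2 ^ (2 * m - 1) * (plap_term a b p u d n - plap_term a b p v d n)) UNIV"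
    using dE assms(1,2) unfolding d_def inE_def
    by (intro infsum_mono Eterm_diff_le_plap_term summable_on_cmult_right summable_on_diff plap_term_summable)
       (simp_all add: inE_def)
  also have "\<dots> = 2 ^ (2 * m - 1) * (infsum (plap_term a b p u d) UNIV - infsum (plap_term a b p v d) UNIV)"
    using dE assms(1,2) by (simp add: infsum_cmult_right' infsum_diff plap_term_summable)
  finally show ?thesis .
qed

end

section \<open>The functional I\<close>

definition logderiv_term :: "(int \<Rightarrow> real) \<Rightarrow> real \<Rightarrow> real \<Rightarrow> (int \<Rightarrow> real) \<Rightarrow> (int \<Rightarrow> real) \<Rightarrow> int \<Rightarrow> real"
  where "logderiv_term c q r u v n = c n * \<bar>u n\<bar> powr (q - 2) * u n * v n * ln (\<bar>u n\<bar> powr r)"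

lemma Ideriv_eq:
  "Ideriv a b c p q r u v = infsum (plap_term a b p u v) UNIV - infsum (logderiv_term c q r u v) UNIV"
  unfolding Ideriv_def plap_term_def logderiv_term_def ..

lemma Ideriv_scale: "Ideriv a b c p q r u (\<lambda>n. s * v n) = s * Ideriv a b c p q r u v"
proof -
  have "logderiv_term c q r u (\<lambda>n. s * v n) = (\<lambda>n. s * logderiv_term c q r u v n)"
    by (simp add: fun_eq_iff logderiv_term_def)
  then show ?thesis
    by (simp add: Ideriv_eq plap_term_scale infsum_cmult_right' right_diff_distrib)
qed

lemma Ideriv_zero: "Ideriv a b c p q r u (\<lambda>n. 0) = 0"
  by (simp add: Ideriv_def fdiff_def)

locale log_functional = even_weighted_space a b p b0 m
  for a b :: "int \<Rightarrow> real" and p b0 :: real and m :: nat +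
  fixes c :: "int \<Rightarrow> real" and q r :: real
  assumes c_pos: "\<And>n. 0 < c n" and c_summable: "c summable_on UNIV"
    and p_less_q: "p < q" and r_ge_1: "1 \<le> r"
begin

lemma q_gt_2: "2 < q"
  using p_less_q m_pos p_eq by linarith

lemma summable_on_c_bound: "(\<And>n. \<bar>g n\<bar> \<le> K * c n) \<Longrightarrow> g summable_on UNIV"
  by (rule summable_on_abs_le[OF summable_on_cmult_right[OF c_summable]])

lemma summable_on_c_mult_abs: "(\<And>n. \<bar>f n\<bar> \<le> K) \<Longrightarrow> (\<lambda>n. c n * \<bar>f n\<bar>) summable_on UNIV"
  using c_pos by (intro summable_on_c_bound[of _ K]) (simp add: abs_mult mult_left_mono mult.commute less_imp_le)

lemma infsum_c_abs_diff_triangle: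
  assumes "\<And>n. \<bar>f n\<bar> \<le> B" "\<And>n. \<bar>g n\<bar> \<le> B" "\<And>n. \<bar>h n\<bar> \<le> B"
  shows "infsum (\<lambda>n. c n * \<bar>f n - g n\<bar>) UNIV
    \<le> infsum (\<lambda>n. c n * \<bar>f n - h n\<bar>) UNIV + infsum (\<lambda>n. c n * \<bar>g n - h n\<bar>) UNIV"
proof -
  have diff_bounds: "\<bar>f n - g n\<bar> \<le> 2 * B" "\<bar>f n - h n\<bar> \<le> 2 * B" "\<bar>g n - h n\<bar> \<le> 2 * B" for n
    using assms(1)[of n] assms(2)[of n] assms(3)[of n] by linarith+
  have fg: "(\<lambda>n. c n * \<bar>f n - g n\<bar>) summable_on UNIV"
    by (rule summable_on_c_mult_abs) (rule diff_bounds(1))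
  have fh: "(\<lambda>n. c n * \<bar>f n - h n\<bar>) summable_on UNIV"
    by (rule summable_on_c_mult_abs) (rule diff_bounds(2))
  have gh: "(\<lambda>n. c n * \<bar>g n - h n\<bar>) summable_on UNIV"
    by (rule summable_on_c_mult_abs) (rule diff_bounds(3))
  have "c n * \<bar>f n - g n\<bar> \<le> c n * \<bar>f n - h n\<bar> + c n * \<bar>g n - h n\<bar>" for n
    using c_pos[of n] by (simp flip: distrib_left add: mult_left_mono)
  then have "infsum (\<lambda>n. c n * \<bar>f n - g n\<bar>) UNIV
      \<le> infsum (\<lambda>n. c n * \<bar>f n - h n\<bar> + c n * \<bar>g n - h n\<bar>) UNIV"
    by (intro infsum_mono fg summable_on_add fh gh)
  also have "\<dots> = infsum (\<lambda>n. c n * \<bar>f n - h n\<bar>) UNIV + infsum (\<lambda>n. c n * \<bar>g n - h n\<bar>) UNIV"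
    by (rule infsum_add[OF fh gh])
  finally show ?thesis .
qed

lemma abs_logterm_le:
  assumes "\<bar>u n\<bar> \<le> B"
  shows "\<bar>logterm c q r u n\<bar> \<le> r * (1 + max 1 B powr (q + 1)) * c n"
  using abs_powr_mult_ln_powr_le[OF _ assms, of q r] q_gt_2 r_ge_1 c_pos[of n]
  by (simp add: logterm_def abs_mult mult_left_mono mult_ac)

lemma inD_iff_inE: "inD a b c p q r u \<longleftrightarrow> inE a b p u"
proof
  assume "inE a b p u"
  then have "logterm c q r u summable_on UNIV"
    by (rule summable_on_c_bound[OF abs_logterm_le[OF abs_le_Esum]])
  with \<open>inE a b p u\<close> show "inD a b c p q r u"
    by (simp add: inD_def)
qed (simp add: inD_def)

lemma abs_logderiv_term_le:
  assumes "\<bar>u n\<bar> \<le> B"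
  shows "\<bar>logderiv_term c q r u v n\<bar> \<le> r * (1 + max 1 B powr q) * (c n * \<bar>v n\<bar>)"
proof -
  have "\<bar>\<bar>u n\<bar> powr (q - 2) * u n * ln (\<bar>u n\<bar> powr r)\<bar> = \<bar>\<bar>u n\<bar> powr (q - 1) * ln (\<bar>u n\<bar> powr r)\<bar>"
    using powr_add[of "\<bar>u n\<bar>" "q - 2" 1] by (cases "u n = 0") (simp_all add: abs_mult)
  also have "\<dots> \<le> r * (1 + max 1 B powr q)"
    using abs_powr_mult_ln_powr_le[OF _ assms, of "q - 1" r] q_gt_2 r_ge_1 by simp
  finally have "c n * \<bar>v n\<bar> * \<bar>\<bar>u n\<bar> powr (q - 2) * u n * ln (\<bar>u n\<bar> powr r)\<bar>
      \<le> c n * \<bar>v n\<bar> * (r * (1 + max 1 B powr q))"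
    using c_pos[of n] by (intro mult_left_mono) auto
  moreover have "\<bar>logderiv_term c q r u v n\<bar>
      = c n * \<bar>v n\<bar> * \<bar>\<bar>u n\<bar> powr (q - 2) * u n * ln (\<bar>u n\<bar> powr r)\<bar>"
    using c_pos[of n] by (simp add: logderiv_term_def abs_mult mult_ac)
  ultimately show ?thesis
    by (simp add: mult_ac)
qed

lemma abs_infsum_logderiv_le:
  assumes u: "\<And>n. \<bar>u n\<bar> \<le> B" and v: "\<And>n. \<bar>v n\<bar> \<le> B'"
  shows "\<bar>infsum (logderiv_term c q r u v) UNIV\<bar> \<le> r * (1 + max 1 B powr q) * infsum (\<lambda>n. c n * \<bar>v n\<bar>) UNIV"
proof -
  have dom: "(\<lambda>n. r * (1 + max 1 B powr q) * (c n * \<bar>v n\<bar>)) summable_on UNIV"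
    using v by (intro summable_on_cmult_right summable_on_c_mult_abs)
  then have abs_sum: "(\<lambda>n. \<bar>logderiv_term c q r u v n\<bar>) summable_on UNIV"
    using abs_logderiv_term_le[OF u] by (intro summable_on_abs_le[OF dom]) simp
  then have "\<bar>infsum (logderiv_term c q r u v) UNIV\<bar> \<le> infsum (\<lambda>n. \<bar>logderiv_term c q r u v n\<bar>) UNIV"
    using norm_infsum_bound[of "logderiv_term c q r u v" UNIV] by simp
  also have "\<dots> \<le> infsum (\<lambda>n. r * (1 + max 1 B powr q) * (c n * \<bar>v n\<bar>)) UNIV"
    using abs_sum dom abs_logderiv_term_le[OF u] by (intro infsum_mono) auto
  finally show ?thesis
    by (simp add: infsum_cmult_right')
qed

lemma Ideriv_self: "Ideriv a b c p q r u u = Esum u - infsum (logterm c q r u) UNIV"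
proof -
  have "\<bar>t\<bar> powr (q - 2) * t * t = \<bar>t\<bar> powr q" for t :: real
    using powr_add[of "\<bar>t\<bar>" "q - 2" 2] q_gt_2 by (cases "t = 0") (auto simp: power2_eq_square)
  then have "logderiv_term c q r u u = logterm c q r u"
    by (simp add: fun_eq_iff logderiv_term_def logterm_def mult.assoc)
  moreover have "plap_term a b p u u = Eterm a b p u"
    by (simp add: fun_eq_iff plap_term_self)
  ultimately show ?thesis
    by (simp add: Ideriv_eq)
qed

lemma Esum_le_Ifun_minus_Ideriv:
  "(1 / p - 1 / q) * Esum u \<le> Ifun a b c p q r u - Ideriv a b c p q r u u / q"
proof -
  have "Ifun a b c p q r u - Ideriv a b c p q r u u / q
      = (1 / p - 1 / q) * Esum u + r / q\<^sup>2 * infsum (\<lambda>n. c n * \<bar>u n\<bar> powr q) UNIV"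
    by (simp add: Ifun_def Enorm_powr Ideriv_self algebra_simps diff_divide_distrib)
  moreover have "0 \<le> r / q\<^sup>2 * infsum (\<lambda>n. c n * \<bar>u n\<bar> powr q) UNIV"
    using r_ge_1 c_pos by (intro mult_nonneg_nonneg infsum_nonneg) (auto simp: less_imp_le)
  ultimately show ?thesis
    by linarith
qed

lemma abs_Ideriv_le_dualnorm:
  "inE a b p v \<Longrightarrow> Enorm a b p v \<le> 1 \<Longrightarrow> ereal \<bar>Ideriv a b c p q r u v\<bar> \<le> dualnorm a b c p q r u"
  unfolding dualnorm_def by (rule SUP_upper) (simp add: inD_iff_inE)

lemma dualnorm_nonneg: "0 \<le> dualnorm a b c p q r u"
  using abs_Ideriv_le_dualnorm[of "\<lambda>n. 0" u] by (simp add: inE_zero Enorm_zero Ideriv_zero flip: zero_ereal_def)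

lemma abs_Ideriv_le_Enorm_dualnorm:
  assumes w: "inE a b p w"
  shows "ereal \<bar>Ideriv a b c p q r u w\<bar> \<le> ereal (Enorm a b p w) * dualnorm a b c p q r u"
proof (cases "Enorm a b p w = 0")
  case True
  then have "w = (\<lambda>n. 0)"
    using Esum_eq_0_imp_zero[OF w] p_pos by (auto simp: Enorm_def)
  then show ?thesis
    using True by (simp add: Ideriv_zero flip: zero_ereal_def)
next
  case False
  define s where "s = Enorm a b p w"
  have s: "0 < s" using False Enorm_nonneg[of w] by (simp add: s_def)
  define v where "v = (\<lambda>n. w n / s)"
  have w_eq: "w = (\<lambda>n. s * v n)" using s by (simp add: v_def)
  have "inE a b p v" "Enorm a b p v = 1"
    using inE_scale[OF w, of "1 / s"] Enorm_scale[of "1 / s" w] s by (simp_all add: v_def s_def)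
  then have "ereal s * ereal \<bar>Ideriv a b c p q r u v\<bar> \<le> ereal s * dualnorm a b c p q r u"
    using s by (intro ereal_mult_left_mono abs_Ideriv_le_dualnorm) auto
  then show ?thesis
    unfolding w_eq Ideriv_scale using s by (simp add: abs_mult s_def[symmetric] flip: w_eq)
qed

lemma Esum_diff_le_Ideriv:
  fixes u v :: "int \<Rightarrow> real"
  assumes uE: "inE a b p u" and vE: "inE a b p v"
    and u: "\<And>n. \<bar>u n\<bar> \<le> B" and v: "\<And>n. \<bar>v n\<bar> \<le> B"
  defines "d \<equiv> \<lambda>n. u n - v n"
  shows "Esum d \<le> 2 ^ (2 * m - 1) * (\<bar>Ideriv a b c p q r u d\<bar> + \<bar>Ideriv a b c p q r v d\<bar>
           + 2 * (r * (1 + max 1 B powr q)) * infsum (\<lambda>n. c n * \<bar>d n\<bar>) UNIV)"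
proof -
  have d: "\<bar>d n\<bar> \<le> 2 * B" for n
    using u[of n] v[of n] by (simp add: d_def)
  have "Esum d \<le> 2 ^ (2 * m - 1) * (infsum (plap_term a b p u d) UNIV - infsum (plap_term a b p v d) UNIV)"
    unfolding d_def by (rule Esum_diff_le_plap[OF uE vE])
  also have "infsum (plap_term a b p u d) UNIV - infsum (plap_term a b p v d) UNIV
      = Ideriv a b c p q r u d - Ideriv a b c p q r v d
        + (infsum (logderiv_term c q r u d) UNIV - infsum (logderiv_term c q r v d) UNIV)"
    by (simp add: Ideriv_eq)
  also have "\<dots> \<le> \<bar>Ideriv a b c p q r u d\<bar> + \<bar>Ideriv a b c p q r v d\<bar>
      + 2 * (r * (1 + max 1 B powr q)) * infsum (\<lambda>n. c n * \<bar>d n\<bar>) UNIV"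
    using abs_infsum_logderiv_le[of u B d, OF u d] abs_infsum_logderiv_le[of v B d, OF v d] by linarith
  finally show ?thesis by simp
qed

section \<open>Cerami sequences\<close>

lemma cerami_dualnorm_tendsto_zero:
  assumes cerami: "(\<lambda>k. dualnorm a b c p q r (u k) * ereal (1 + Enorm a b p (u k))) \<longlonglongrightarrow> 0"
  shows "(\<lambda>k. dualnorm a b c p q r (u k)) \<longlonglongrightarrow> 0"
proof (rule tendsto_sandwich[OF _ _ tendsto_const cerami])
  have "dualnorm a b c p q r (u k) * 1 \<le> dualnorm a b c p q r (u k) * ereal (1 + Enorm a b p (u k))" for k
    using dualnorm_nonneg Enorm_nonneg[of "u k"] by (intro ereal_mult_left_mono) (auto simp: one_ereal_def)
  then show "\<forall>\<^sub>F k in sequentially. dualnorm a b c p q r (u k) \<le> dualnorm a b c p q r (u k) * ereal (1 + Enorm a b p (u k))"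
    by simp
qed (simp add: dualnorm_nonneg)

lemma cerami_Ideriv_self_tendsto_zero:
  assumes uE: "\<And>k. inE a b p (u k)"
    and cerami: "(\<lambda>k. dualnorm a b c p q r (u k) * ereal (1 + Enorm a b p (u k))) \<longlonglongrightarrow> 0"
  shows "(\<lambda>k. Ideriv a b c p q r (u k) (u k)) \<longlonglongrightarrow> 0"
proof -
  have "(\<lambda>k. ereal \<bar>Ideriv a b c p q r (u k) (u k)\<bar>) \<longlonglongrightarrow> 0"
  proof (rule tendsto_sandwich[OF _ _ tendsto_const cerami])
    have "ereal \<bar>Ideriv a b c p q r (u k) (u k)\<bar> \<le> ereal (Enorm a b p (u k)) * dualnorm a b c p q r (u k)" for k
      by (rule abs_Ideriv_le_Enorm_dualnorm[OF uE])
    also have "ereal (Enorm a b p (u k)) * dualnorm a b c p q r (u k)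
        \<le> dualnorm a b c p q r (u k) * ereal (1 + Enorm a b p (u k))" for k
      using dualnorm_nonneg by (subst mult.commute) (intro ereal_mult_left_mono; simp)
    finally show "\<forall>\<^sub>F k in sequentially. ereal \<bar>Ideriv a b c p q r (u k) (u k)\<bar>
        \<le> dualnorm a b c p q r (u k) * ereal (1 + Enorm a b p (u k))"
      by simp
  qed simp
  then have "(\<lambda>k. \<bar>Ideriv a b c p q r (u k) (u k)\<bar>) \<longlonglongrightarrow> 0"
    unfolding zero_ereal_def lim_ereal .
  then show ?thesis
    by (simp add: tendsto_rabs_zero_iff)
qed

lemma cerami_Esum_bounded:
  assumes uE: "\<And>k. inE a b p (u k)" and I_conv: "convergent (\<lambda>k. Ifun a b c p q r (u k))"
    and cerami: "(\<lambda>k. dualnorm a b c p q r (u k) * ereal (1 + Enorm a b p (u k))) \<longlonglongrightarrow> 0"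
  obtains M where "\<And>k. Esum (u k) \<le> M"
proof -
  obtain L where "(\<lambda>k. Ifun a b c p q r (u k)) \<longlonglongrightarrow> L"
    using I_conv by (auto simp: convergent_def)
  then have "(\<lambda>k. Ifun a b c p q r (u k) - Ideriv a b c p q r (u k) (u k) / q) \<longlonglongrightarrow> L - 0 / q"
    using q_gt_2 by (intro tendsto_intros cerami_Ideriv_self_tendsto_zero[OF uE cerami]) auto
  then have "Bseq (\<lambda>k. Ifun a b c p q r (u k) - Ideriv a b c p q r (u k) (u k) / q)"
    by (intro convergent_imp_Bseq convergentI)
  then obtain K where K: "\<And>k. \<bar>Ifun a b c p q r (u k) - Ideriv a b c p q r (u k) (u k) / q\<bar> \<le> K"
    unfolding Bseq_def by auto
  have pq: "0 < 1 / p - 1 / q"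
    using p_pos p_less_q by (simp add: frac_less2)
  have "Esum (u k) \<le> K / (1 / p - 1 / q)" for k
    using order_trans[OF Esum_le_Ifun_minus_Ideriv abs_le_D1[OF K]] pq by (simp add: field_simps)
  then show ?thesis by (rule that)
qed

lemma dualnorm_tendsto_zero_imp_Ideriv_le:
  assumes dn: "(\<lambda>k. dualnorm a b c p q r (u k)) \<longlonglongrightarrow> 0"
  obtains \<delta> K where "\<delta> \<longlonglongrightarrow> 0" "\<And>k. 0 \<le> \<delta> k"
    "\<And>k v. K \<le> k \<Longrightarrow> inE a b p v \<Longrightarrow> \<bar>Ideriv a b c p q r (u k) v\<bar> \<le> \<delta> k * Enorm a b p v"
proof -
  \<comment> \<open>\<open>real_of_ereal\<close> sends \<open>\<infinity>\<close> to \<open>0\<close>, so \<open>\<delta> k\<close> is a bound only once the dual norm is finite,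
    which is what the threshold \<open>K\<close> ensures.\<close>
  define \<delta> where "\<delta> k = real_of_ereal (dualnorm a b c p q r (u k))" for k
  have "\<delta> \<longlonglongrightarrow> 0"
    using dn unfolding \<delta>_def zero_ereal_def by (rule lim_real_of_ereal)
  moreover have "0 \<le> \<delta> k" for k
    using dualnorm_nonneg by (simp add: \<delta>_def real_of_ereal_pos)
  moreover obtain K where K: "\<And>k. K \<le> k \<Longrightarrow> dualnorm a b c p q r (u k) < 1"
    using order_tendstoD(2)[OF dn, of 1] by (auto simp: eventually_sequentially)
  have "\<bar>Ideriv a b c p q r (u k) v\<bar> \<le> \<delta> k * Enorm a b p v" if "K \<le> k" "inE a b p v" for k v
  proof -
    have "dualnorm a b c p q r (u k) = ereal (\<delta> k)"
      using K[OF that(1)] dualnorm_nonneg[of "u k"] by (cases "dualnorm a b c p q r (u k)") (auto simp: \<delta>_def)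
    then show ?thesis
      using abs_Ideriv_le_Enorm_dualnorm[OF that(2), of "u k"] by (simp add: mult.commute)
  qed
  ultimately show thesis using that by blast
qed

lemma Esum_diff_pairwise_bound:
  assumes uE: "\<And>k. inE a b p (u k)" and M: "\<And>k. Esum (u k) \<le> M"
    and B: "\<And>k n. \<bar>u k n\<bar> \<le> B" "\<And>n. \<bar>w n\<bar> \<le> B" and lim: "\<And>n. (\<lambda>k. u k n) \<longlonglongrightarrow> w n"
    and dn: "(\<lambda>k. dualnorm a b c p q r (u k)) \<longlonglongrightarrow> 0"
  obtains \<beta> K where "\<beta> \<longlonglongrightarrow> 0" "\<And>i j. K \<le> i \<Longrightarrow> K \<le> j \<Longrightarrow> Esum (\<lambda>n. u i n - u j n) \<le> \<beta> i + \<beta> j"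
proof -
  obtain \<delta> K where \<delta>: "\<delta> \<longlonglongrightarrow> 0" "\<And>k. 0 \<le> \<delta> k"
    and deriv: "\<And>k v. K \<le> k \<Longrightarrow> inE a b p v \<Longrightarrow> \<bar>Ideriv a b c p q r (u k) v\<bar> \<le> \<delta> k * Enorm a b p v"
    using dualnorm_tendsto_zero_imp_Ideriv_le[OF dn] by blast
  define C where "C = (2 ^ (2 * m) * (2 * M)) powr (1 / p)"
  have C: "Enorm a b p (\<lambda>n. u i n - u j n) \<le> C" for i j
    unfolding C_def by (rule Enorm_diff_le[OF uE uE M M])
  define \<alpha> where "\<alpha> k = infsum (\<lambda>n. c n * \<bar>u k n - w n\<bar>) UNIV" for k
  have \<alpha>: "\<alpha> \<longlonglongrightarrow> 0"
    unfolding \<alpha>_def using c_pos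
    by (intro weighted_abs_diff_tendsto_zero[OF _ c_summable B lim]) (simp add: less_imp_le)
  have weighted_dist: "infsum (\<lambda>n. c n * \<bar>u i n - u j n\<bar>) UNIV \<le> \<alpha> i + \<alpha> j" for i j
    unfolding \<alpha>_def by (rule infsum_c_abs_diff_triangle[OF B(1) B(1) B(2)])
  define G where "G = r * (1 + max 1 B powr q)"
  have "0 \<le> G" using r_ge_1 by (simp add: G_def add_nonneg_nonneg)
  define \<beta> where "\<beta> k = 2 ^ (2 * m - 1) * (C * \<delta> k + 2 * G * \<alpha> k)" for k
  have "\<beta> \<longlonglongrightarrow> 2 ^ (2 * m - 1) * (C * 0 + 2 * G * 0)"
    unfolding \<beta>_def by (intro tendsto_intros \<delta> \<alpha>)
  then have "\<beta> \<longlonglongrightarrow> 0" by simp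
  moreover have "Esum (\<lambda>n. u i n - u j n) \<le> \<beta> i + \<beta> j" if "K \<le> i" "K \<le> j" for i j
  proof -
    have I: "\<bar>Ideriv a b c p q r (u k) (\<lambda>n. u i n - u j n)\<bar> \<le> \<delta> k * C" if "K \<le> k" for k
      using deriv[OF that inE_diff[OF uE uE]] mult_left_mono[OF C \<delta>(2)] by (rule order_trans)
    have "2 * G * infsum (\<lambda>n. c n * \<bar>u i n - u j n\<bar>) UNIV \<le> 2 * G * (\<alpha> i + \<alpha> j)"
      using weighted_dist \<open>0 \<le> G\<close> by (intro mult_left_mono) auto
    with I[OF that(1)] I[OF that(2)]
    have "\<bar>Ideriv a b c p q r (u i) (\<lambda>n. u i n - u j n)\<bar> + \<bar>Ideriv a b c p q r (u j) (\<lambda>n. u i n - u j n)\<bar>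
        + 2 * G * infsum (\<lambda>n. c n * \<bar>u i n - u j n\<bar>) UNIV \<le> \<delta> i * C + \<delta> j * C + 2 * G * (\<alpha> i + \<alpha> j)"
      by linarith
    then have "2 ^ (2 * m - 1) * (\<bar>Ideriv a b c p q r (u i) (\<lambda>n. u i n - u j n)\<bar>
        + \<bar>Ideriv a b c p q r (u j) (\<lambda>n. u i n - u j n)\<bar> + 2 * G * infsum (\<lambda>n. c n * \<bar>u i n - u j n\<bar>) UNIV)
        \<le> 2 ^ (2 * m - 1) * (\<delta> i * C + \<delta> j * C + 2 * G * (\<alpha> i + \<alpha> j))"
      by (rule mult_left_mono) simp
    also have "\<dots> = \<beta> i + \<beta> j"
      unfolding \<beta>_def by (simp add: algebra_simps)
    finally show ?thesis
      using Esum_diff_le_Ideriv[OF uE uE B(1) B(1), of i j] unfolding G_def by linarith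
  qed
  ultimately show thesis by (rule that)
qed

theorem cerami_has_convergent_subseq:
  assumes uE: "\<And>k. inE a b p (u k)" and I_conv: "convergent (\<lambda>k. Ifun a b c p q r (u k))"
    and cerami: "(\<lambda>k. dualnorm a b c p q r (u k) * ereal (1 + Enorm a b p (u k))) \<longlonglongrightarrow> 0"
  shows "\<exists>\<phi> w. strict_mono \<phi> \<and> inE a b p w \<and> (\<lambda>k. Enorm a b p (\<lambda>n. u (\<phi> k) n - w n)) \<longlonglongrightarrow> 0"
proof -
  obtain M where M: "\<And>k. Esum (u k) \<le> M"
    using cerami_Esum_bounded[OF uE I_conv cerami] by blast
  have B: "\<bar>u k n\<bar> \<le> 1 + M / b0" for k n
    using abs_le_Esum[OF uE, of k n] divide_right_mono[OF M[of k] less_imp_le[OF b0_pos]] by linarith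
  obtain \<phi> w where \<phi>: "strict_mono \<phi>" and lim: "\<And>n. (\<lambda>k. u (\<phi> k) n) \<longlonglongrightarrow> w n"
    and w: "\<And>n. \<bar>w n\<bar> \<le> 1 + M / b0"
    using bounded_seq_has_pointwise_convergent_subseq[of u "1 + M / b0"] B by blast
  have "(\<lambda>k. dualnorm a b c p q r (u (\<phi> k))) \<longlonglongrightarrow> 0"
    using LIMSEQ_subseq_LIMSEQ[OF cerami_dualnorm_tendsto_zero[OF cerami] \<phi>] by (simp add: o_def)
  then obtain \<beta> K where "\<beta> \<longlonglongrightarrow> 0"
    "\<And>i j. K \<le> i \<Longrightarrow> K \<le> j \<Longrightarrow> Esum (\<lambda>n. u (\<phi> i) n - u (\<phi> j) n) \<le> \<beta> i + \<beta> j"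
    using Esum_diff_pairwise_bound[of "\<lambda>k. u (\<phi> k)"] uE M B w lim by blast
  then show ?thesis
    using E_limit_of_pairwise_bound[of "\<lambda>k. u (\<phi> k)" w] uE lim \<phi> by blast
qed

end

theorem lemma4p2:
  fixes p q r d0 :: real and a b c :: "int \<Rightarrow> real" and u :: "nat \<Rightarrow> int \<Rightarrow> real"
  assumes "1 < p" and "p < q" and "\<exists>m::nat. m > 0 \<and> p / 2 = real m" and "r \<ge> 1"
    and "\<forall>n. a n > 0" and "\<forall>n. b n > 0" and "\<forall>n. c n > 0"
    and C1: "\<exists>b0>0. \<forall>n. b n \<ge> b0" "\<forall>M. \<exists>N. \<forall>n. \<bar>n\<bar> \<ge> N \<longrightarrow> b n \<ge> M"
    and C2: "\<exists>c0>0. \<forall>n. c n \<le> c0" "c summable_on UNIV"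
    and "d0 > 0"
    and "\<forall>k. inD a b c p q r (u k)"
    and "(\<lambda>k. Ifun a b c p q r (u k)) \<longlonglongrightarrow> d0"
    and "(\<lambda>k. dualnorm a b c p q r (u k) * ereal (1 + Enorm a b p (u k))) \<longlonglongrightarrow> 0"
  shows "\<exists>\<phi> w. strict_mono \<phi> \<and> inD a b c p q r w \<and>
           (\<lambda>k. Enorm a b p (\<lambda>n. u (\<phi> k) n - w n)) \<longlonglongrightarrow> 0"
proof -
  obtain m :: nat where "0 < m" "p = 2 * real m"
    using assms(3) by auto
  moreover obtain b0 where "0 < b0" "\<forall>n. b0 \<le> b n"
    using C1(1) by blast
  ultimately interpret log_functional a b p b0 m c q r
    using assms(2,4,5,7) C2(2) by unfold_locales auto
  have "\<And>k. inE a b p (u k)"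
    using assms(13) by (simp add: inD_iff_inE)
  moreover have "convergent (\<lambda>k. Ifun a b c p q r (u k))"
    using assms(14) by (rule convergentI)
  ultimately show ?thesis
    using cerami_has_convergent_subseq assms(15) by (simp add: inD_iff_inE)
qed

end
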